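(* Let $\{X_\gamma\}_{\gamma\in\Gamma}$ be a family of strictly convex real Banach spaces with $\dim(X_\gamma)\geq 2$ for every $\gamma\in\Gamma$, and let $Z_\infty=\bigoplus^{\ell_\infty}_{\gamma\in\Gamma}X_\gamma$. Then every convex body in $Z_\infty$ satisfies the strong Mankiewicz property.
   Context: All Banach spaces are real. $Z_\infty=\bigoplus^{\ell_\infty}_{\gamma\in\Gamma}X_\gamma$ is the space of families $z=(z(\gamma))_{\gamma\in\Gamma}$ with $z(\gamma)\in X_\gamma$ and $\|z\|=\sup_\gamma\|z(\gamma)\|<\infty$. A Banach space is strictly convex if every point of its unit sphere is an extreme point of its closed unit ball. A convex body of a normed space is a closed convex subset with non-empty interior. A convex subset $C$ of a normed space satisfies the strong Mankiewicz property if every surjective isometry from $C$ onto an arbitrary convex subset $L$ of an arbitrary normed space $Y$ is affine. *)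

theory Defs
  imports "HOL-Analysis.Analysis"
begin

text \<open>Each Banach space X_gamma is represented (up to linear isometry) as a closed
  linear subspace X gamma of one ambient real Banach space of type 'a, with the
  restricted norm.\<close>

definition strictly_convex_space :: "'a::real_normed_vector set \<Rightarrow> bool" where
  "strictly_convex_space X \<longleftrightarrow>
     (\<forall>x\<in>X. norm x = 1 \<longrightarrow> x extreme_point_of (X \<inter> cball 0 1))"

definition dim_ge_2 :: "'a::real_vector set \<Rightarrow> bool" where
  "dim_ge_2 X \<longleftrightarrow> (\<forall>v. \<not> X \<subseteq> span {v})"

definition linf_sum :: "('i \<Rightarrow> 'a::real_normed_vector set) \<Rightarrow> ('i \<Rightarrow> 'a) set" where
  "linf_sum X = {z. (\<forall>\<gamma>. z \<gamma> \<in> X \<gamma>) \<and> bdd_above (range (\<lambda>\<gamma>. norm (z \<gamma>)))}"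

definition linf_norm :: "('i \<Rightarrow> 'a::real_normed_vector) \<Rightarrow> real" where
  "linf_norm z = (SUP \<gamma>. norm (z \<gamma>))"

definition linf_dist :: "('i \<Rightarrow> 'a::real_normed_vector) \<Rightarrow> ('i \<Rightarrow> 'a) \<Rightarrow> real" where
  "linf_dist z w = linf_norm (\<lambda>\<gamma>. z \<gamma> - w \<gamma>)"

definition lcomb :: "real \<Rightarrow> ('i \<Rightarrow> 'a::real_vector) \<Rightarrow> ('i \<Rightarrow> 'a) \<Rightarrow> ('i \<Rightarrow> 'a)" where
  "lcomb t x y = (\<lambda>\<gamma>. (1 - t) *\<^sub>R x \<gamma> + t *\<^sub>R y \<gamma>)"

definition linf_convex :: "('i \<Rightarrow> 'a::real_vector) set \<Rightarrow> bool" where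
  "linf_convex C \<longleftrightarrow> (\<forall>x\<in>C. \<forall>y\<in>C. \<forall>t. 0 \<le> t \<and> t \<le> 1 \<longrightarrow> lcomb t x y \<in> C)"

definition linf_convex_body :: "('i \<Rightarrow> 'a::real_normed_vector set) \<Rightarrow> ('i \<Rightarrow> 'a) set \<Rightarrow> bool" where
  "linf_convex_body X C \<longleftrightarrow>
     C \<subseteq> linf_sum X \<and> linf_convex C \<and>
     (\<forall>z\<in>linf_sum X. (\<forall>e>0. \<exists>c\<in>C. linf_dist z c < e) \<longrightarrow> z \<in> C) \<and>
     (\<exists>z\<in>C. \<exists>r>0. {w\<in>linf_sum X. linf_dist w z < r} \<subseteq> C)"

definition strong_mankiewicz :: "('i \<Rightarrow> 'a::real_normed_vector) set \<Rightarrow> 'b::real_normed_vector itself \<Rightarrow> bool" where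
  "strong_mankiewicz C _ \<longleftrightarrow>
     (\<forall>(f :: ('i \<Rightarrow> 'a) \<Rightarrow> 'b) L.
        convex L \<and> f ` C = L \<and> (\<forall>x\<in>C. \<forall>y\<in>C. dist (f x) (f y) = linf_dist x y)
        \<longrightarrow> (\<forall>x\<in>C. \<forall>y\<in>C. \<forall>t. 0 \<le> t \<and> t \<le> 1 \<longrightarrow>
               f (lcomb t x y) = (1 - t) *\<^sub>R f x + t *\<^sub>R f y))"

end

theory Submission
  imports Defs
begin

(* Let f map C isometrically onto a convex set and let w be a preimage of (1 - t) f x + t f y;
   we show w = (1 - t) x + t y.  If y - x has the same norm in every coordinate, w lies
   metrically between x and y coordinatewise, so strict convexity of each X gamma puts it on
   the segment.  If a ball of radius 3 |y - x| around m = (1 - t) x + t y lies in C and w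
   differs from m at gamma0, push m away from w at gamma0 by 2 |y - x| and pass a segment of
   the first kind through the new point, with endpoints within 2 |y - x| of x and y: f is
   affine on it, so the isometry puts w within 2 |y - x| of that point, although at gamma0 the
   two are further apart.  Chaining short segments gives affinity on every segment with a
   uniform neighbourhood in C, and shrinking an arbitrary segment towards an interior point
   of C by a factor l, l -> 0, gives the general case. *)

lemma strictly_convex_space_between_eq:
  fixes S :: "'a::real_normed_vector set"
  assumes strict: "strictly_convex_space S" and S: "subspace S" and "u \<in> S" and "a \<in> S"
    and na: "norm a \<le> t * norm u" and nua: "norm (u - a) \<le> (1 - t) * norm u"
    and "0 \<le> t" "t \<le> 1"
  shows "a = t *\<^sub>R u"
proof -
  consider "u = 0" | "t = 0" | "t = 1" | "u \<noteq> 0" "0 < t" "t < 1"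
    using \<open>0 \<le> t\<close> \<open>t \<le> 1\<close> by linarith
  then show ?thesis
  proof cases
    case 1
    then show ?thesis
      using na by simp
  next
    case 2
    then show ?thesis
      using na by simp
  next
    case 3
    then show ?thesis
      using nua by simp
  next
    case 4
    define r where "r = norm u"
    have "r > 0"
      using 4 by (simp add: r_def)
    define p where "p = (1 / (t * r)) *\<^sub>R a"
    define q where "q = (1 / ((1 - t) * r)) *\<^sub>R (u - a)"
    have "p \<in> S" "q \<in> S"
      using S \<open>u \<in> S\<close> \<open>a \<in> S\<close> by (simp_all add: p_def q_def subspace_scale subspace_diff)
    moreover have "norm p \<le> 1" "norm q \<le> 1"
      using na nua \<open>r > 0\<close> 4 by (simp_all add: p_def q_def r_def divide_le_eq)
    ultimately have p: "p \<in> S \<inter> cball 0 1" and q: "q \<in> S \<inter> cball 0 1"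
      by simp_all
    have extreme: "(1 / r) *\<^sub>R u extreme_point_of (S \<inter> cball 0 1)"
      using strict S \<open>u \<in> S\<close> \<open>r > 0\<close> unfolding strictly_convex_space_def
      by (simp add: subspace_scale r_def)
    have comb: "(1 / r) *\<^sub>R u = (1 - t) *\<^sub>R q + t *\<^sub>R p"
    proof -
      have "(1 - t) *\<^sub>R q = (1 / r) *\<^sub>R (u - a)" "t *\<^sub>R p = (1 / r) *\<^sub>R a"
        using \<open>r > 0\<close> 4 by (simp_all add: p_def q_def)
      then show ?thesis
        by (simp add: scaleR_diff_right)
    qed
    have "p = q"
    proof (rule ccontr)
      assume "p \<noteq> q"
      then have "(1 / r) *\<^sub>R u \<in> open_segment q p"
        using comb 4 unfolding in_segment by auto
      then show False
        using extreme p q unfolding extreme_point_of_def by blast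
    qed
    then have "p = (1 / r) *\<^sub>R u"
      using comb by (metis scaleR_add_left diff_add_cancel scaleR_one)
    moreover have "a = (t * r) *\<^sub>R p"
      using \<open>r > 0\<close> 4 by (simp add: p_def)
    ultimately show ?thesis
      using \<open>r > 0\<close> by simp
  qed
qed

lemma dim_ge_2_imp_unit_vector:
  assumes "subspace S" "dim_ge_2 S"
  shows "\<exists>u\<in>S. norm u = 1"
proof -
  have "\<not> S \<subseteq> span {0}"
    using \<open>dim_ge_2 S\<close> unfolding dim_ge_2_def by blast
  then obtain v where "v \<in> S" "v \<noteq> 0"
    by auto
  then show ?thesis
    using \<open>subspace S\<close> by (intro bexI[of _ "(1 / norm v) *\<^sub>R v"]) (auto simp: subspace_scale)
qed

lemma subspace_opposite_vector:
  assumes "subspace S" "k \<in> S" "k \<noteq> 0" "0 \<le> s"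
  obtains v where "v \<in> S" "norm v = s" "norm (k - v) = norm k + s"
proof
  show "- (s / norm k) *\<^sub>R k \<in> S"
    using assms by (simp add: subspace_neg subspace_scale)
  show "norm (- (s / norm k) *\<^sub>R k) = s"
    using assms by simp
  have "k - - (s / norm k) *\<^sub>R k = (1 + s / norm k) *\<^sub>R k"
    by (simp add: algebra_simps)
  then show "norm (k - - (s / norm k) *\<^sub>R k) = norm k + s"
    using assms by (simp add: field_simps)
qed

lemma norm_scaleR_diff_le:
  fixes a b :: "'a::real_normed_vector"
  assumes "0 \<le> t" "t \<le> 1"
  shows "norm (t *\<^sub>R (a - b)) \<le> norm a + norm b"
proof -
  have "norm (t *\<^sub>R (a - b)) \<le> norm (a - b)"
    using assms by (simp add: mult_left_le_one_le)
  then show ?thesis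
    by (rule order_trans[OF _ norm_triangle_ineq4])
qed

lemma vanishing_if_locally_affine:
  fixes h :: "real \<Rightarrow> 'b::real_vector"
  assumes d: "0 < d" "d \<le> 1"
    and affine: "\<And>a b s. 0 \<le> a \<Longrightarrow> a \<le> b \<Longrightarrow> b \<le> 1 \<Longrightarrow> b - a \<le> d \<Longrightarrow> 0 \<le> s \<Longrightarrow> s \<le> 1 \<Longrightarrow>
        h ((1 - s) * a + s * b) = (1 - s) *\<^sub>R h a + s *\<^sub>R h b"
    and h0: "h 0 = 0" and hd: "h d = 0"
    and \<tau>: "0 \<le> \<tau>" "\<tau> \<le> 1"
  shows "h \<tau> = 0"
proof -
  have vanish: "h \<tau> = 0" if "0 \<le> \<tau>" "\<tau> \<le> 1" "\<tau> \<le> d + real n * (d / 2)" for n \<tau>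
    using that
  proof (induction n arbitrary: \<tau>)
    case 0
    then have "h ((1 - \<tau> / d) * 0 + (\<tau> / d) * d) = (1 - \<tau> / d) *\<^sub>R h 0 + (\<tau> / d) *\<^sub>R h d"
      using d by (intro affine) auto
    then show ?case
      using h0 hd d by simp
  next
    case (Suc n)
    show ?case
    proof (cases "\<tau> \<le> d + real n * (d / 2)")
      case True
      then show ?thesis
        using Suc by blast
    next
      case False
      have step: "real (Suc n) * (d / 2) = real n * (d / 2) + d / 2"
        by (simp add: algebra_simps)
      have "0 \<le> real n * (d / 2)"
        using d by simp
      then have "d \<le> \<tau>"
        using False by linarith
      \<comment> \<open>\<open>h\<close> already vanishes at \<open>\<tau> - d\<close> and at the midpoint \<open>\<tau> - d / 2\<close> of \<open>[\<tau> - d, \<tau>]\<close>.\<close>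
      have "h ((1 - 1 / 2) * (\<tau> - d) + 1 / 2 * \<tau>) = (1 - 1 / 2) *\<^sub>R h (\<tau> - d) + (1 / 2) *\<^sub>R h \<tau>"
        using \<open>d \<le> \<tau>\<close> Suc.prems d by (intro affine) simp_all
      moreover have "(1 - 1 / 2) * (\<tau> - d) + 1 / 2 * \<tau> = \<tau> - d / 2"
        by (simp add: field_simps)
      moreover have "h (\<tau> - d) = 0" "h (\<tau> - d / 2) = 0"
        using \<open>d \<le> \<tau>\<close> Suc.prems d step by (intro Suc.IH; linarith)+
      ultimately show ?thesis
        by simp
    qed
  qed
  obtain n :: nat where "2 / d \<le> real n"
    using real_arch_simple by blast
  then have "1 \<le> d + real n * (d / 2)"
    using d by (simp add: divide_le_eq algebra_simps)
  then show ?thesis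
    using \<tau> by (intro vanish[of _ n]) linarith+
qed

lemma affine_if_locally_affine:
  fixes g :: "real \<Rightarrow> 'b::real_vector"
  assumes "\<delta> > 0"
    and affine: "\<And>a b s. 0 \<le> a \<Longrightarrow> a \<le> b \<Longrightarrow> b \<le> 1 \<Longrightarrow> b - a \<le> \<delta> \<Longrightarrow> 0 \<le> s \<Longrightarrow> s \<le> 1 \<Longrightarrow>
        g ((1 - s) * a + s * b) = (1 - s) *\<^sub>R g a + s *\<^sub>R g b"
    and t: "0 \<le> t" "t \<le> 1"
  shows "g t = (1 - t) *\<^sub>R g 0 + t *\<^sub>R g 1"
proof -
  define d where "d = min \<delta> 1"
  have d: "0 < d" "d \<le> \<delta>" "d \<le> 1"
    using \<open>\<delta> > 0\<close> by (auto simp: d_def)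
  define B where "B = (1 / d) *\<^sub>R (g d - g 0)"
  define h where "h \<tau> = g \<tau> - g 0 - \<tau> *\<^sub>R B" for \<tau>
  have "h \<tau> = 0" if "0 \<le> \<tau>" "\<tau> \<le> 1" for \<tau>
  proof (rule vanishing_if_locally_affine[OF d(1,3) _ _ _ that])
    fix a b s :: real
    assume "0 \<le> a" "a \<le> b" "b \<le> 1" "b - a \<le> d" "0 \<le> s" "s \<le> 1"
    then have "g ((1 - s) * a + s * b) = (1 - s) *\<^sub>R g a + s *\<^sub>R g b"
      using d by (intro affine) auto
    then show "h ((1 - s) * a + s * b) = (1 - s) *\<^sub>R h a + s *\<^sub>R h b"
      by (simp add: h_def algebra_simps)
  qed (use d in \<open>simp_all add: h_def B_def\<close>)
  from this[of 1] this[OF t] show ?thesis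
    by (simp add: h_def algebra_simps)
qed

lemma nonpos_if_le_scaled:
  fixes a K :: real
  assumes "\<And>l. 0 < l \<Longrightarrow> l \<le> 1 \<Longrightarrow> a \<le> l * K"
  shows "a \<le> 0"
proof (rule field_le_epsilon)
  fix e :: real
  assume "0 < e"
  define l where "l = min 1 (e / (\<bar>K\<bar> + 1))"
  have l: "0 < l" "l \<le> 1"
    using \<open>0 < e\<close> by (auto simp: l_def)
  have "a \<le> l * \<bar>K\<bar>"
    using assms[OF l] l by (smt (verit) abs_ge_self mult_left_mono)
  also have "\<dots> \<le> e / (\<bar>K\<bar> + 1) * \<bar>K\<bar>"
    by (intro mult_right_mono) (auto simp: l_def)
  also have "\<dots> \<le> e"
    using \<open>0 < e\<close> by (simp add: field_simps)
  finally show "a \<le> 0 + e"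
    by simp
qed

lemma linf_sum_bounded:
  assumes "z \<in> linf_sum X"
  obtains M where "\<And>\<gamma>. norm (z \<gamma>) \<le> M"
  using assms by (auto simp: linf_sum_def bdd_above_def)

lemma norm_le_linf_dist:
  assumes "z \<in> linf_sum X" "w \<in> linf_sum X"
  shows "norm (z \<gamma> - w \<gamma>) \<le> linf_dist z w"
proof -
  obtain M N where "\<And>\<gamma>. norm (z \<gamma>) \<le> M" "\<And>\<gamma>. norm (w \<gamma>) \<le> N"
    using assms by (metis linf_sum_bounded)
  then have "\<And>\<gamma>. norm (z \<gamma> - w \<gamma>) \<le> M + N"
    by (meson add_mono norm_triangle_ineq4 order_trans)
  then show ?thesis
    unfolding linf_dist_def linf_norm_def by (intro cSUP_upper bdd_aboveI2) auto
qed

lemma linf_dist_nonneg: "z \<in> linf_sum X \<Longrightarrow> w \<in> linf_sum X \<Longrightarrow> 0 \<le> linf_dist z w"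
  by (rule order_trans[OF norm_ge_zero norm_le_linf_dist])

lemma linf_dist_le: "(\<And>\<gamma>. norm (z \<gamma> - w \<gamma>) \<le> B) \<Longrightarrow> linf_dist z w \<le> B"
  unfolding linf_dist_def linf_norm_def by (rule cSUP_least) auto

lemma linf_sum_if_near:
  assumes "m \<in> linf_sum X" "\<And>\<gamma>. q \<gamma> \<in> X \<gamma>" "\<And>\<gamma>. norm (q \<gamma> - m \<gamma>) \<le> B"
  shows "q \<in> linf_sum X"
proof -
  obtain M where "\<And>\<gamma>. norm (m \<gamma>) \<le> M"
    using linf_sum_bounded[OF assms(1)] by blast
  then have "\<And>\<gamma>. norm (q \<gamma>) \<le> M + B"
    using assms(3) by (smt (verit) norm_triangle_sub)
  then have "bdd_above (range (\<lambda>\<gamma>. norm (q \<gamma>)))"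
    by (rule bdd_aboveI2)
  then show ?thesis
    using assms(2) unfolding linf_sum_def by blast
qed

lemma lcomb_0 [simp]: "lcomb 0 x y = x"
  and lcomb_1 [simp]: "lcomb 1 x y = y"
  by (simp_all add: lcomb_def)

lemma lcomb_lcomb: "lcomb s (lcomb a x y) (lcomb b x y) = lcomb ((1 - s) * a + s * b) x y"
  by (rule ext) (simp add: lcomb_def algebra_simps)

lemma lcomb_lcomb_same_right: "lcomb \<tau> (lcomb l x c) (lcomb l y c) = lcomb l (lcomb \<tau> x y) c"
  by (rule ext) (simp add: lcomb_def algebra_simps)

lemma linf_dist_lcomb_lcomb_le:
  assumes "x \<in> linf_sum X" "y \<in> linf_sum X"
  shows "linf_dist (lcomb a x y) (lcomb b x y) \<le> \<bar>a - b\<bar> * linf_dist x y"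
proof (rule linf_dist_le)
  fix \<gamma>
  have "lcomb a x y \<gamma> - lcomb b x y \<gamma> = (b - a) *\<^sub>R (x \<gamma> - y \<gamma>)"
    by (simp add: lcomb_def algebra_simps)
  then show "norm (lcomb a x y \<gamma> - lcomb b x y \<gamma>) \<le> \<bar>a - b\<bar> * linf_dist x y"
    using norm_le_linf_dist[OF assms] by (simp add: abs_minus_commute mult_left_mono)
qed

lemma constant_norm_extension:
  assumes "\<And>\<gamma>. subspace (X \<gamma>)" "\<And>\<gamma>. \<exists>u\<in>X \<gamma>. norm u = 1" "a \<in> X \<gamma>0"
  obtains e where "\<And>\<gamma>. e \<gamma> \<in> X \<gamma>" "\<And>\<gamma>. norm (e \<gamma>) = norm a" "e \<gamma>0 = a"
proof -
  obtain u where u: "\<forall>\<gamma>. u \<gamma> \<in> X \<gamma> \<and> norm (u \<gamma>) = 1"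
    using choice[of "\<lambda>\<gamma> u. u \<in> X \<gamma> \<and> norm u = 1"] assms(2) by blast
  show ?thesis
    using that[of "\<lambda>\<gamma>. if \<gamma> = \<gamma>0 then a else norm a *\<^sub>R u \<gamma>"] assms(1,3) u
    by (simp add: subspace_scale)
qed

lemma linf_sum_flat_segment_through:
  assumes sub: "\<And>\<gamma>. subspace (X \<gamma>)" and unit: "\<And>\<gamma>. \<exists>u\<in>X \<gamma>. norm u = 1"
    and x: "x \<in> linf_sum X" and y: "y \<in> linf_sum X" and t: "0 \<le> t" "t \<le> 1"
    and v0: "v0 \<in> X \<gamma>0" "2 * linf_dist y x \<le> norm v0"
  obtains z z' \<rho> where "z \<in> linf_sum X" "z' \<in> linf_sum X" "\<And>\<gamma>. norm (z' \<gamma> - z \<gamma>) = \<rho>"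
    and "lcomb t z z' = (\<lambda>\<gamma>. lcomb t x y \<gamma> + (if \<gamma> = \<gamma>0 then v0 else 0))"
    and "linf_dist x z \<le> norm v0" "linf_dist y z' \<le> norm v0"
    and "linf_dist z (lcomb t x y) \<le> norm v0 + linf_dist y x"
    and "linf_dist z' (lcomb t x y) \<le> norm v0 + linf_dist y x"
proof -
  define m where "m = lcomb t x y"
  define D where "D = linf_dist y x"
  define v where "v \<gamma> = (if \<gamma> = \<gamma>0 then v0 else 0)" for \<gamma>
  have xy: "x \<gamma> \<in> X \<gamma>" "y \<gamma> \<in> X \<gamma>" for \<gamma>
    using x y by (auto simp: linf_sum_def)
  have dyx: "norm (y \<gamma> - x \<gamma>) \<le> D" for \<gamma>
    unfolding D_def using y x by (rule norm_le_linf_dist)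
  \<comment> \<open>Taking \<open>e \<gamma>0 = y \<gamma>0 - x \<gamma>0\<close> makes \<open>x - z\<close> and \<open>y - z'\<close> equal to \<open>-v0\<close> at \<open>\<gamma>0\<close>.\<close>
  have "y \<gamma>0 - x \<gamma>0 \<in> X \<gamma>0"
    using sub xy by (simp add: subspace_diff)
  then obtain e where e: "\<And>\<gamma>. e \<gamma> \<in> X \<gamma>" "\<And>\<gamma>. norm (e \<gamma>) = norm (y \<gamma>0 - x \<gamma>0)"
    "e \<gamma>0 = y \<gamma>0 - x \<gamma>0"
    by (rule constant_norm_extension[OF sub unit]) blast
  define z where "z \<gamma> = m \<gamma> + v \<gamma> - t *\<^sub>R e \<gamma>" for \<gamma>
  define z' where "z' \<gamma> = m \<gamma> + v \<gamma> + (1 - t) *\<^sub>R e \<gamma>" for \<gamma>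
  have ne: "norm (e \<gamma>) \<le> D" for \<gamma>
    using e(2) dyx by simp
  have "x \<gamma> - z \<gamma> = t *\<^sub>R (e \<gamma> - (y \<gamma> - x \<gamma>)) - v \<gamma>"
    and "y \<gamma> - z' \<gamma> = (1 - t) *\<^sub>R ((y \<gamma> - x \<gamma>) - e \<gamma>) - v \<gamma>" for \<gamma>
    by (simp_all add: z_def z'_def m_def lcomb_def algebra_simps)
  then have xz: "norm (x \<gamma> - z \<gamma>) \<le> norm v0" and yz': "norm (y \<gamma> - z' \<gamma>) \<le> norm v0" for \<gamma>
    using norm_scaleR_diff_le[of t "e \<gamma>" "y \<gamma> - x \<gamma>"] norm_scaleR_diff_le[of "1 - t" "y \<gamma> - x \<gamma>" "e \<gamma>"]
      ne[of \<gamma>] dyx[of \<gamma>] t v0(2) e(3)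
    by (auto simp: v_def D_def)
  have "z \<gamma> - m \<gamma> = v \<gamma> - t *\<^sub>R e \<gamma>" "z' \<gamma> - m \<gamma> = v \<gamma> + (1 - t) *\<^sub>R e \<gamma>" for \<gamma>
    by (simp_all add: z_def z'_def)
  moreover have "t * norm (e \<gamma>) \<le> D" "(1 - t) * norm (e \<gamma>) \<le> D" "norm (v \<gamma>) \<le> norm v0" for \<gamma>
    using t ne[of \<gamma>] by (auto simp: v_def intro: order_trans[OF mult_left_le_one_le])
  ultimately have zm: "norm (z \<gamma> - m \<gamma>) \<le> norm v0 + D" "norm (z' \<gamma> - m \<gamma>) \<le> norm v0 + D" for \<gamma>
    using t by (auto intro!: order_trans[OF norm_triangle_ineq4] order_trans[OF norm_triangle_ineq] add_mono)
  have "m \<gamma> \<in> X \<gamma>" "v \<gamma> \<in> X \<gamma>" for \<gamma>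
    using sub xy v0 by (auto simp: m_def lcomb_def v_def subspace_add subspace_scale subspace_0)
  then have zX: "z \<gamma> \<in> X \<gamma>" "z' \<gamma> \<in> X \<gamma>" for \<gamma>
    using sub e(1) by (simp_all add: z_def z'_def subspace_add subspace_scale subspace_diff)
  have "z \<in> linf_sum X"
    using xz by (intro linf_sum_if_near[OF x zX(1)]) (simp add: norm_minus_commute)
  moreover have "z' \<in> linf_sum X"
    using yz' by (intro linf_sum_if_near[OF y zX(2)]) (simp add: norm_minus_commute)
  moreover have "linf_dist x z \<le> norm v0" "linf_dist y z' \<le> norm v0"
    and "linf_dist z m \<le> norm v0 + D" "linf_dist z' m \<le> norm v0 + D"
    using xz yz' zm by (auto intro: linf_dist_le)
  moreover have "lcomb t z z' = (\<lambda>\<gamma>. m \<gamma> + v \<gamma>)"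
    by (rule ext) (simp add: lcomb_def z_def z'_def algebra_simps)
  moreover have "norm (z' \<gamma> - z \<gamma>) = norm (y \<gamma>0 - x \<gamma>0)" for \<gamma>
    using e(2) by (simp add: z_def z'_def algebra_simps)
  ultimately show ?thesis
    using that unfolding m_def D_def v_def by blast
qed

locale linf_convex_subset =
  fixes X :: "'i \<Rightarrow> 'a::real_normed_vector set" and C :: "('i \<Rightarrow> 'a) set"
  assumes subspace_X: "\<And>\<gamma>. subspace (X \<gamma>)"
    and C_subset: "C \<subseteq> linf_sum X"
    and linf_convex_C: "linf_convex C"
begin

lemma mem_linf_sum: "x \<in> C \<Longrightarrow> x \<in> linf_sum X"
  using C_subset by blast

lemma mem_X: "x \<in> C \<Longrightarrow> x \<gamma> \<in> X \<gamma>"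
  using C_subset by (auto simp: linf_sum_def)

lemma lcomb_mem: "x \<in> C \<Longrightarrow> y \<in> C \<Longrightarrow> 0 \<le> t \<Longrightarrow> t \<le> 1 \<Longrightarrow> lcomb t x y \<in> C"
  using linf_convex_C unfolding linf_convex_def by blast

lemma lcomb_ball_subset:
  assumes c: "c \<in> C" and ball: "{q \<in> linf_sum X. linf_dist q c < r} \<subseteq> C"
    and p: "p \<in> C" and l: "0 < l" "l \<le> 1"
    and q: "q \<in> linf_sum X" "linf_dist q (lcomb l p c) < l * r"
  shows "q \<in> C"
proof -
  define q0 where "q0 \<gamma> = c \<gamma> + (1 / l) *\<^sub>R (q \<gamma> - lcomb l p c \<gamma>)" for \<gamma>
  have pc: "lcomb l p c \<in> C"
    using lcomb_mem[OF p c] l by simp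
  have near: "norm (q0 \<gamma> - c \<gamma>) \<le> linf_dist q (lcomb l p c) / l" for \<gamma>
    using norm_le_linf_dist[OF q(1) mem_linf_sum[OF pc]] l by (simp add: q0_def divide_right_mono)
  have "q0 \<gamma> \<in> X \<gamma>" for \<gamma>
    using q(1) mem_X[OF c] mem_X[OF pc] subspace_X
    by (simp add: q0_def linf_sum_def subspace_add subspace_diff subspace_scale)
  then have "q0 \<in> linf_sum X"
    using near by (rule linf_sum_if_near[OF mem_linf_sum[OF c]])
  moreover have "linf_dist q0 c \<le> linf_dist q (lcomb l p c) / l"
    using near by (rule linf_dist_le)
  moreover have "\<dots> < r"
    using q(2) l by (simp add: pos_divide_less_eq mult.commute)
  ultimately have "q0 \<in> C"
    using ball by force
  moreover have "q = lcomb l p q0"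
    using l by (intro ext) (simp add: q0_def lcomb_def algebra_simps)
  ultimately show ?thesis
    using lcomb_mem[OF p] l by simp
qed

end

locale linf_isometry = linf_convex_subset X C
  for X :: "'i \<Rightarrow> 'a::real_normed_vector set" and C +
  fixes f :: "('i \<Rightarrow> 'a) \<Rightarrow> 'b::real_normed_vector"
  assumes strictly_convex_X: "\<And>\<gamma>. strictly_convex_space (X \<gamma>)"
    and unit_vector_X: "\<And>\<gamma>. \<exists>u\<in>X \<gamma>. norm u = 1"
    and convex_image: "convex (f ` C)"
    and isometry: "\<And>x y. x \<in> C \<Longrightarrow> y \<in> C \<Longrightarrow> dist (f x) (f y) = linf_dist x y"
begin

lemma convex_combination_preimage:
  assumes "x \<in> C" "y \<in> C" "0 \<le> t" "t \<le> 1"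
  obtains w where "w \<in> C" "f w = (1 - t) *\<^sub>R f x + t *\<^sub>R f y"
proof -
  have "(1 - t) *\<^sub>R f x + t *\<^sub>R f y \<in> f ` C"
    using convex_image assms by (intro convexD) auto
  then obtain w where "w \<in> C" "(1 - t) *\<^sub>R f x + t *\<^sub>R f y = f w"
    by (rule imageE)
  then show ?thesis
    using that by simp
qed

lemma linf_dist_preimage_le:
  assumes x: "x \<in> C" and y: "y \<in> C" and z: "z \<in> C" and z': "z' \<in> C" and w: "w \<in> C"
    and t: "0 \<le> t" "t \<le> 1"
    and fw: "f w = (1 - t) *\<^sub>R f x + t *\<^sub>R f y"
    and affine: "f (lcomb t z z') = (1 - t) *\<^sub>R f z + t *\<^sub>R f z'"
    and B: "linf_dist x z \<le> B" "linf_dist y z' \<le> B"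
  shows "linf_dist w (lcomb t z z') \<le> B"
proof -
  have "linf_dist w (lcomb t z z') = norm (f w - f (lcomb t z z'))"
    using isometry[OF w lcomb_mem[OF z z' t]] by (simp add: dist_norm)
  also have "f w - f (lcomb t z z') = (1 - t) *\<^sub>R (f x - f z) + t *\<^sub>R (f y - f z')"
    unfolding fw affine by (simp add: algebra_simps)
  also have "norm \<dots> \<le> (1 - t) * norm (f x - f z) + t * norm (f y - f z')"
    using t by (intro order_trans[OF norm_triangle_ineq]) simp
  also have "\<dots> = (1 - t) * linf_dist x z + t * linf_dist y z'"
    using isometry[OF x z] isometry[OF y z'] by (simp add: dist_norm)
  also have "\<dots> \<le> (1 - t) * B + t * B"
    using t B by (intro add_mono mult_left_mono) auto
  finally show ?thesis
    by (simp add: algebra_simps)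
qed

lemma affine_on_flat_segment:
  assumes x: "x \<in> C" and y: "y \<in> C" and flat: "\<And>\<gamma>. norm (y \<gamma> - x \<gamma>) = r"
    and t: "0 \<le> t" "t \<le> 1"
  shows "f (lcomb t x y) = (1 - t) *\<^sub>R f x + t *\<^sub>R f y"
proof -
  obtain w where w: "w \<in> C" "f w = (1 - t) *\<^sub>R f x + t *\<^sub>R f y"
    using convex_combination_preimage[OF x y t] .
  have dyx: "linf_dist y x = r"
  proof (rule antisym)
    show "linf_dist y x \<le> r"
      using flat by (intro linf_dist_le) simp
    show "r \<le> linf_dist y x"
      using norm_le_linf_dist[OF mem_linf_sum[OF y] mem_linf_sum[OF x], of undefined] flat by simp
  qed
  have "linf_dist w x = norm (f w - f x)"
    using isometry[OF w(1) x] by (simp add: dist_norm)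
  also have "f w - f x = t *\<^sub>R (f y - f x)"
    unfolding w(2) by (simp add: algebra_simps)
  finally have dwx: "linf_dist w x = t * r"
    using isometry[OF y x] dyx t by (simp add: dist_norm)
  have "linf_dist y w = norm (f y - f w)"
    using isometry[OF y w(1)] by (simp add: dist_norm)
  also have "f y - f w = (1 - t) *\<^sub>R (f y - f x)"
    unfolding w(2) by (simp add: algebra_simps)
  finally have dyw: "linf_dist y w = (1 - t) * r"
    using isometry[OF y x] dyx t by (simp add: dist_norm)
  \<comment> \<open>In every coordinate \<open>w\<close> lies metrically between \<open>x\<close> and \<open>y\<close>, hence on the segment.\<close>
  have "w \<gamma> - x \<gamma> = t *\<^sub>R (y \<gamma> - x \<gamma>)" for \<gamma>
  proof (rule strictly_convex_space_between_eq[OF strictly_convex_X subspace_X])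
    show "y \<gamma> - x \<gamma> \<in> X \<gamma>" "w \<gamma> - x \<gamma> \<in> X \<gamma>"
      using mem_X[OF x] mem_X[OF y] mem_X[OF w(1)] subspace_X by (simp_all add: subspace_diff)
    show "norm (w \<gamma> - x \<gamma>) \<le> t * norm (y \<gamma> - x \<gamma>)"
      using norm_le_linf_dist[OF mem_linf_sum[OF w(1)] mem_linf_sum[OF x]] dwx flat by simp
    show "norm (y \<gamma> - x \<gamma> - (w \<gamma> - x \<gamma>)) \<le> (1 - t) * norm (y \<gamma> - x \<gamma>)"
      using norm_le_linf_dist[OF mem_linf_sum[OF y] mem_linf_sum[OF w(1)]] dyw flat by simp
  qed (use t in auto)
  then have "w = lcomb t x y"
    by (intro ext) (simp add: lcomb_def algebra_simps)
  then show ?thesis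
    using w(2) by simp
qed

lemma affine_if_ball_subset:
  assumes x: "x \<in> C" and y: "y \<in> C" and t: "0 \<le> t" "t \<le> 1"
    and ball: "\<And>q. q \<in> linf_sum X \<Longrightarrow> linf_dist q (lcomb t x y) \<le> 3 * linf_dist y x \<Longrightarrow> q \<in> C"
  shows "f (lcomb t x y) = (1 - t) *\<^sub>R f x + t *\<^sub>R f y"
proof -
  define m where "m = lcomb t x y"
  define D where "D = linf_dist y x"
  have D: "0 \<le> D"
    unfolding D_def using mem_linf_sum[OF y] mem_linf_sum[OF x] by (rule linf_dist_nonneg)
  obtain w where w: "w \<in> C" "f w = (1 - t) *\<^sub>R f x + t *\<^sub>R f y"
    using convex_combination_preimage[OF x y t] .
  have "w \<gamma>0 = m \<gamma>0" for \<gamma>0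
  proof (rule ccontr)
    assume "w \<gamma>0 \<noteq> m \<gamma>0"
    define k where "k = w \<gamma>0 - m \<gamma>0"
    have "k \<noteq> 0"
      using \<open>w \<gamma>0 \<noteq> m \<gamma>0\<close> by (simp add: k_def)
    have "k \<in> X \<gamma>0"
      using mem_X[OF w(1)] mem_X[OF lcomb_mem[OF x y t]] subspace_X
      by (simp add: k_def m_def subspace_diff)
    moreover have "0 \<le> 2 * D"
      using D by simp
    \<comment> \<open>Push the midpoint away from \<open>w \<gamma>0\<close> by \<open>2 D\<close>; the segment through the new point still
      has its endpoints within \<open>2 D\<close> of \<open>x\<close> and \<open>y\<close>, and \<open>f\<close> is affine on it.\<close>
    ultimately obtain v0 where v0: "v0 \<in> X \<gamma>0" "norm v0 = 2 * D" "norm (k - v0) = norm k + 2 * D"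
      using subspace_opposite_vector[OF subspace_X] \<open>k \<noteq> 0\<close> by blast
    obtain z z' \<rho> where z: "z \<in> linf_sum X" "z' \<in> linf_sum X" "\<And>\<gamma>. norm (z' \<gamma> - z \<gamma>) = \<rho>"
      and c: "lcomb t z z' = (\<lambda>\<gamma>. m \<gamma> + (if \<gamma> = \<gamma>0 then v0 else 0))"
      and dist: "linf_dist x z \<le> 2 * D" "linf_dist y z' \<le> 2 * D"
      and "linf_dist z m \<le> 3 * D" "linf_dist z' m \<le> 3 * D"
      using linf_sum_flat_segment_through[OF subspace_X unit_vector_X mem_linf_sum[OF x]
          mem_linf_sum[OF y] t v0(1)] v0(2)
      unfolding m_def D_def by auto
    then have "z \<in> C" "z' \<in> C"
      using ball unfolding m_def D_def by auto
    have "linf_dist w (lcomb t z z') \<le> 2 * D"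
      using affine_on_flat_segment[OF \<open>z \<in> C\<close> \<open>z' \<in> C\<close> z(3) t] dist
      by (intro linf_dist_preimage_le[OF x y \<open>z \<in> C\<close> \<open>z' \<in> C\<close> w(1) t w(2)])
    moreover have "norm (w \<gamma>0 - lcomb t z z' \<gamma>0) = norm k + 2 * D"
      using v0(3) by (simp add: c k_def diff_diff_eq)
    moreover have "norm (w \<gamma>0 - lcomb t z z' \<gamma>0) \<le> linf_dist w (lcomb t z z')"
      using mem_linf_sum[OF w(1)] mem_linf_sum[OF lcomb_mem[OF \<open>z \<in> C\<close> \<open>z' \<in> C\<close> t]]
      by (rule norm_le_linf_dist)
    moreover have "norm k > 0"
      using \<open>k \<noteq> 0\<close> by simp
    ultimately show False
      by linarith
  qed
  then have "w = m"
    by (rule ext)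
  then show ?thesis
    using w(2) by (simp add: m_def)
qed

lemma affine_if_segment_neighbourhood_subset:
  assumes x: "x \<in> C" and y: "y \<in> C" and "\<rho> > 0"
    and nbhd: "\<And>\<tau> q. 0 \<le> \<tau> \<Longrightarrow> \<tau> \<le> 1 \<Longrightarrow> q \<in> linf_sum X \<Longrightarrow> linf_dist q (lcomb \<tau> x y) \<le> \<rho> \<Longrightarrow> q \<in> C"
    and t: "0 \<le> t" "t \<le> 1"
  shows "f (lcomb t x y) = (1 - t) *\<^sub>R f x + t *\<^sub>R f y"
proof -
  define D where "D = linf_dist x y"
  have "0 \<le> D"
    unfolding D_def using mem_linf_sum[OF x] mem_linf_sum[OF y] by (rule linf_dist_nonneg)
  define \<delta> where "\<delta> = \<rho> / (3 * D + 1)"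
  have "\<delta> > 0"
    using \<open>0 \<le> D\<close> \<open>\<rho> > 0\<close> by (simp add: \<delta>_def)
  have "f (lcomb t x y) = (1 - t) *\<^sub>R f (lcomb 0 x y) + t *\<^sub>R f (lcomb 1 x y)"
  proof (rule affine_if_locally_affine[OF \<open>\<delta> > 0\<close> _ t, where g = "\<lambda>\<tau>. f (lcomb \<tau> x y)"])
    fix a b s :: real
    assume ab: "0 \<le> a" "a \<le> b" "b \<le> 1" "b - a \<le> \<delta>" and s: "0 \<le> s" "s \<le> 1"
    define x' where "x' = lcomb a x y"
    define y' where "y' = lcomb b x y"
    have "x' \<in> C" "y' \<in> C"
      using lcomb_mem[OF x y] ab by (auto simp: x'_def y'_def)
    have "linf_dist y' x' \<le> (b - a) * D"
      using linf_dist_lcomb_lcomb_le[OF mem_linf_sum[OF x] mem_linf_sum[OF y], of b a] ab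
      by (simp add: x'_def y'_def D_def)
    also have "\<dots> \<le> \<delta> * D"
      using ab \<open>0 \<le> D\<close> by (simp add: mult_right_mono)
    finally have "linf_dist y' x' \<le> \<delta> * D" .
    moreover have "3 * (\<delta> * D) \<le> \<rho>"
      using \<open>0 \<le> D\<close> \<open>\<rho> > 0\<close> by (simp add: \<delta>_def field_simps)
    ultimately have "3 * linf_dist y' x' \<le> \<rho>"
      by linarith
    moreover have "lcomb s x' y' = lcomb ((1 - s) * a + s * b) x y"
      unfolding x'_def y'_def by (rule lcomb_lcomb)
    moreover have "0 \<le> (1 - s) * a + s * b" "(1 - s) * a + s * b \<le> 1"
      using ab s by (simp_all add: convex_bound_le)
    ultimately have "f (lcomb s x' y') = (1 - s) *\<^sub>R f x' + s *\<^sub>R f y'"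
      using nbhd by (intro affine_if_ball_subset[OF \<open>x' \<in> C\<close> \<open>y' \<in> C\<close> s]) force
    then show "f (lcomb ((1 - s) * a + s * b) x y) = (1 - s) *\<^sub>R f (lcomb a x y) + s *\<^sub>R f (lcomb b x y)"
      by (simp add: x'_def y'_def lcomb_lcomb)
  qed
  then show ?thesis
    by simp
qed

lemma affine_on_shrunk_segment:
  assumes x: "x \<in> C" and y: "y \<in> C" and c: "c \<in> C" and "r > 0"
    and ball: "{q \<in> linf_sum X. linf_dist q c < r} \<subseteq> C"
    and l: "0 < l" "l \<le> 1" and t: "0 \<le> t" "t \<le> 1"
  shows "f (lcomb t (lcomb l x c) (lcomb l y c)) = (1 - t) *\<^sub>R f (lcomb l x c) + t *\<^sub>R f (lcomb l y c)"
proof (rule affine_if_segment_neighbourhood_subset[OF _ _ _ _ t])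
  show "lcomb l x c \<in> C" "lcomb l y c \<in> C"
    using lcomb_mem[OF x c] lcomb_mem[OF y c] l by simp_all
  have "0 < l * r"
    using \<open>r > 0\<close> l by simp
  then show "0 < l * r / 2"
    by simp
  fix \<tau> q
  assume \<tau>: "0 \<le> \<tau>" "\<tau> \<le> 1" and q: "q \<in> linf_sum X"
    and "linf_dist q (lcomb \<tau> (lcomb l x c) (lcomb l y c)) \<le> l * r / 2"
  then have "linf_dist q (lcomb l (lcomb \<tau> x y) c) < l * r"
    using \<open>0 < l * r\<close> by (simp add: lcomb_lcomb_same_right)
  then show "q \<in> C"
    using lcomb_ball_subset[OF c ball lcomb_mem[OF x y \<tau>] l q] by blast
qed

lemma affine_if_interior_point:
  assumes x: "x \<in> C" and y: "y \<in> C" and t: "0 \<le> t" "t \<le> 1"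
    and c: "c \<in> C" and "r > 0" and ball: "{q \<in> linf_sum X. linf_dist q c < r} \<subseteq> C"
  shows "f (lcomb t x y) = (1 - t) *\<^sub>R f x + t *\<^sub>R f y"
proof -
  obtain w where w: "w \<in> C" "f w = (1 - t) *\<^sub>R f x + t *\<^sub>R f y"
    using convex_combination_preimage[OF x y t] .
  define m where "m = lcomb t x y"
  have "m \<in> C"
    using lcomb_mem[OF x y t] by (simp add: m_def)
  have lin: "x \<in> linf_sum X" "y \<in> linf_sum X" "c \<in> linf_sum X" "m \<in> linf_sum X" "w \<in> linf_sum X"
    using x y c \<open>m \<in> C\<close> w(1) by (simp_all add: mem_linf_sum)
  define K where "K = linf_dist x c + linf_dist y c + linf_dist m c"
  \<comment> \<open>\<open>w\<close> is close to the point of the shrunk segment corresponding to \<open>m\<close>, and so to \<open>m\<close>.\<close>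
  have "norm (w \<gamma> - m \<gamma>) \<le> l * K" if l: "0 < l" "l \<le> 1" for l \<gamma>
  proof -
    have z: "lcomb l x c \<in> C" "lcomb l y c \<in> C"
      using lcomb_mem[OF x c] lcomb_mem[OF y c] l by simp_all
    have "linf_dist x (lcomb l x c) \<le> l * (linf_dist x c + linf_dist y c)"
      and "linf_dist y (lcomb l y c) \<le> l * (linf_dist x c + linf_dist y c)"
      and "linf_dist m (lcomb l m c) \<le> l * linf_dist m c"
      using linf_dist_lcomb_lcomb_le[OF lin(1,3), of 0 l] linf_dist_lcomb_lcomb_le[OF lin(2,3), of 0 l]
        linf_dist_lcomb_lcomb_le[OF lin(4,3), of 0 l] linf_dist_nonneg[OF lin(1,3)]
        linf_dist_nonneg[OF lin(2,3)] l
      by (simp_all add: distrib_left add_increasing2 add_increasing)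
    moreover have "lcomb l m c \<in> linf_sum X"
      using mem_linf_sum lcomb_mem[OF \<open>m \<in> C\<close> c] l by simp
    moreover have "linf_dist w (lcomb l m c) \<le> l * (linf_dist x c + linf_dist y c)"
      using linf_dist_preimage_le[OF x y z w(1) t w(2) affine_on_shrunk_segment[OF x y c \<open>r > 0\<close> ball l t]
          calculation(1,2)]
      by (simp add: m_def lcomb_lcomb_same_right)
    ultimately show ?thesis
      using norm_le_linf_dist[OF lin(5), of "lcomb l m c" \<gamma>] norm_le_linf_dist[OF lin(4), of "lcomb l m c" \<gamma>]
        norm_triangle_ineq4[of "w \<gamma> - lcomb l m c \<gamma>" "m \<gamma> - lcomb l m c \<gamma>"]
      by (simp add: K_def algebra_simps)
  qed
  then have "w \<gamma> = m \<gamma>" for \<gamma>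
    using nonpos_if_le_scaled[of "norm (w \<gamma> - m \<gamma>)" K] by simp
  then have "w = m"
    by (rule ext)
  then show ?thesis
    using w(2) by (simp add: m_def)
qed

end

theorem proposition2p6:
  fixes X :: "'i \<Rightarrow> 'a::banach set"
    and C :: "('i \<Rightarrow> 'a) set"
  assumes "\<And>\<gamma>. subspace (X \<gamma>)"
    and "\<And>\<gamma>. closed (X \<gamma>)"
    and "\<And>\<gamma>. strictly_convex_space (X \<gamma>)"
    and "\<And>\<gamma>. dim_ge_2 (X \<gamma>)"
    and "linf_convex_body X C"
  shows "strong_mankiewicz C TYPE('b::real_normed_vector)"
  unfolding strong_mankiewicz_def
proof (intro allI impI ballI)
  fix f :: "('i \<Rightarrow> 'a) \<Rightarrow> 'b" and L x y and t :: real
  assume iso: "convex L \<and> f ` C = L \<and> (\<forall>x\<in>C. \<forall>y\<in>C. dist (f x) (f y) = linf_dist x y)"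
    and xyt: "x \<in> C" "y \<in> C" "0 \<le> t \<and> t \<le> 1"
  interpret linf_isometry X C f
    using assms iso dim_ge_2_imp_unit_vector[OF assms(1,4)]
    by unfold_locales (auto simp: linf_convex_body_def)
  obtain c r where "c \<in> C" "r > 0" "{q \<in> linf_sum X. linf_dist q c < r} \<subseteq> C"
    using assms(5) unfolding linf_convex_body_def by blast
  then show "f (lcomb t x y) = (1 - t) *\<^sub>R f x + t *\<^sub>R f y"
    using affine_if_interior_point xyt by blast
qed

end
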